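(* For all $n,k\in\mathbb Z$, $[x^ky^{n-k}](x+y)^n=\binom nk_{a,b;q,p}$. In particular, \[ (x+y)^n=\sum_{k\ge0}\binom nk_{a,b;q,p}x^ky^{n-k}\ \text{ in } \mathbb C_{a,b;q,p}[[x,y,y^{-1}]],\qquad (x+y)^n=\sum_{k\le n}\binom nk_{a,b;q,p}x^ky^{n-k}\ \text{ in } \mathbb C_{a,b;q,p}[[x,x^{-1},y]]. \]
   Context: Let $q,p\in\mathbb C$ with $|p|<1$. $\theta(x;p)=\prod_{j\ge0}(1-p^jx)(1-p^{j+1}/x)$, $\theta(x_1,\dots,x_\ell;p)=\prod_i\theta(x_i;p)$. Let $\mathbb E_{a,b;q,p}$ be the field of totally elliptic functions in $\log_qa,\log_qb$ (meromorphic, doubly periodic with equal periods $\sigma^{-1},\tau\sigma^{-1}$ where $q=e^{2\pi i\sigma},p=e^{2\pi i\tau}$). $\mathbb C_{a,b;q,p}[x,x^{-1},y,y^{-1}]$ is the associative unital $\mathbb C$-algebra generated by invertible $x,y$ and $\mathbb E_{a,b;q,p}$ (with $a,b$ commuting) subject to $x^{-1}x=xx^{-1}=1$, $y^{-1}y=yy^{-1}=1$, $yx=w_{a,b;q,p}(1,1)xy$, $xf(a,b)=f(aq,bq^2)x$, $yf(a,b)=f(aq^2,bq)y$ for all $f\in\mathbb E_{a,b;q,p}$; $\mathbb C_{a,b;q,p}[[x,y,y^{-1}]]$ and $\mathbb C_{a,b;q,p}[[x,x^{-1},y]]$ are the formal power series extensions (no negative powers of $x$, resp. of $y$), with $(x+y)^n$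 for $n<0$ expanded as $((1+xy^{-1})y)^n$, resp. $(x(1+x^{-1}y))^n$. Here $w_{a,b;q,p}(s,t)=\frac{\theta(aq^{s+2t},bq^{2s+t-2},aq^{t-s-1}/b;p)}{\theta(aq^{s+2t-2},bq^{2s+t},aq^{t-s+1}/b;p)}q$, $W_{a,b;q,p}(s,t)=\prod_{j=1}^tw_{a,b;q,p}(s,j)$ with product convention $\prod_{j=l}^mA_j=A_l\cdots A_m$ ($m>l-1$), $1$ ($m=l-1$), $A_{l-1}^{-1}\cdots A_{m+1}^{-1}$ ($m<l-1$). The elliptic binomial coefficients $\binom nk_{a,b;q,p}$ are the unique family with $\binom n0=\binom nn=1$ and $\binom{n+1}k=\binom nk+\binom n{k-1}W_{a,b;q,p}(k,n+1-k)$ for $(n+1,k)\ne(0,0)$ (closed form $\frac{(q^{1+k},aq^{1+k},bq^{1+k},aq^{1-k}/b;q,p)_{n-k}}{(q,aq,bq^{1+2k},aq/b;q,p)_{n-k}}$, $(x;q,p)_r=\prod_{i=0}^{r-1}\theta(xq^i;p)$). Coefficient extraction: $[x^ky^{n-k}](x+y)^n$ is the coefficient of $x^ky^{n-k}$ (coefficient written on the left) in the first expansion if $k\ge0$ and in the second expansion if $k<0$. *)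

theory Defs
  imports "HOL-Analysis.Analysis"
begin

definition theta :: "complex \<Rightarrow> complex \<Rightarrow> complex" where
  "theta x p = (\<Prod>j. (1 - p ^ j * x) * (1 - p ^ Suc j / x))"

text \<open>Product with the convention prod_{j=l}^m A_j = A_l...A_m (m > l-1), 1 (m = l-1),
  A_(l-1)^-1 ... A_(m+1)^-1 (m < l-1).  (Complex numbers commute, so order is irrelevant.)\<close>
definition gprod :: "(int \<Rightarrow> complex) \<Rightarrow> int \<Rightarrow> int \<Rightarrow> complex" where
  "gprod A l m = (if l - 1 \<le> m then (\<Prod>j\<in>{l..m}. A j) else (\<Prod>j\<in>{m+1..l-1}. inverse (A j)))"

definition ew :: "complex \<Rightarrow> complex \<Rightarrow> complex \<Rightarrow> complex \<Rightarrow> int \<Rightarrow> int \<Rightarrow> complex" where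
  "ew a b q p s t =
     (theta (a * q powi (s + 2 * t)) p * theta (b * q powi (2 * s + t - 2)) p * theta (a * q powi (t - s - 1) / b) p)
   / (theta (a * q powi (s + 2 * t - 2)) p * theta (b * q powi (2 * s + t)) p * theta (a * q powi (t - s + 1) / b) p)
   * q"

definition eW :: "complex \<Rightarrow> complex \<Rightarrow> complex \<Rightarrow> complex \<Rightarrow> int \<Rightarrow> int \<Rightarrow> complex" where
  "eW a b q p s t = gprod (\<lambda>j. ew a b q p s j) 1 t"

definition is_ebinom :: "complex \<Rightarrow> complex \<Rightarrow> complex \<Rightarrow> complex \<Rightarrow> (int \<Rightarrow> int \<Rightarrow> complex) \<Rightarrow> bool" where
  "is_ebinom a b q p C \<longleftrightarrow>
     (\<forall>n. C n 0 = 1 \<and> C n n = 1) \<and>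
     (\<forall>n k. (n + 1, k) \<noteq> (0, 0) \<longrightarrow> C (n + 1) k = C n k + C n (k - 1) * eW a b q p k (n + 1 - k))"

definition ebinom :: "complex \<Rightarrow> complex \<Rightarrow> complex \<Rightarrow> complex \<Rightarrow> int \<Rightarrow> int \<Rightarrow> complex" where
  "ebinom a b q p = (THE C. is_ebinom a b q p C)"

text \<open>A series is a family of coefficients: s k l is the coefficient (a function of (a,b),
  written on the left) of x^k y^l.\<close>
type_synonym eser = "int \<Rightarrow> int \<Rightarrow> (complex \<Rightarrow> complex \<Rightarrow> complex)"

text \<open>Commutation factor: y^l x^m = Phi(l,m) x^m y^l, Phi(l,m) = prod_{j=1}^m W(j,l).\<close>
definition ePhi :: "complex \<Rightarrow> complex \<Rightarrow> int \<Rightarrow> int \<Rightarrow> complex \<Rightarrow> complex \<Rightarrow> complex" where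
  "ePhi q p l m a b = gprod (\<lambda>j. eW a b q p j l) 1 m"

definition szero :: eser where "szero = (\<lambda>k l a b. 0)"

definition sone :: eser where "sone = (\<lambda>k l a b. if (k, l) = (0, 0) then 1 else 0)"

definition smono :: "int \<Rightarrow> int \<Rightarrow> eser" where
  "smono i j = (\<lambda>k l a b. if (k, l) = (i, j) then 1 else 0)"

definition sadd :: "eser \<Rightarrow> eser \<Rightarrow> eser" where
  "sadd c d = (\<lambda>k l a b. c k l a b + d k l a b)"

definition sneg :: "eser \<Rightarrow> eser" where
  "sneg c = (\<lambda>k l a b. - c k l a b)"

text \<open>Product, using x f(a,b) = f(aq,bq^2) x, y f(a,b) = f(aq^2,bq) y and y^l x^m = Phi(l,m) x^m y^l:
  (f x^k1 y^l1)(g x^k2 y^l2) = f(a,b) g(aq^(k1+2l1), bq^(2k1+l1)) Phi(l1,k2)(aq^k1,bq^(2k1)) x^(k1+k2) y^(l1+l2).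
  The sum ranges over the (finite, in both completed algebras) set of contributing index pairs.\<close>
definition smul :: "complex \<Rightarrow> complex \<Rightarrow> eser \<Rightarrow> eser \<Rightarrow> eser" where
  "smul q p c d = (\<lambda>k l a b.
     \<Sum>(k1, l1) \<in> {(k1, l1). c k1 l1 \<noteq> (\<lambda>a b. 0) \<and> d (k - k1) (l - l1) \<noteq> (\<lambda>a b. 0)}.
        c k1 l1 a b * d (k - k1) (l - l1) (a * q powi (k1 + 2 * l1)) (b * q powi (2 * k1 + l1))
        * ePhi q p l1 (k - k1) (a * q powi k1) (b * q powi (2 * k1)))"

fun spow :: "complex \<Rightarrow> complex \<Rightarrow> eser \<Rightarrow> nat \<Rightarrow> eser" where
  "spow q p s 0 = sone"
| "spow q p s (Suc n) = smul q p (spow q p s n) s"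

definition ssum :: "(nat \<Rightarrow> eser) \<Rightarrow> eser" where
  "ssum F = (\<lambda>k l a b. \<Sum>j \<in> {j. F j k l \<noteq> (\<lambda>a b. 0)}. F j k l a b)"

text \<open>(1+u)^(-1) = sum_{j>=0} (-u)^j\<close>
definition sgeo :: "complex \<Rightarrow> complex \<Rightarrow> eser \<Rightarrow> eser" where
  "sgeo q p u = ssum (\<lambda>j. spow q p (sneg u) j)"

text \<open>(x+y)^(-1) in C[[x,y,y^-1]]: ((1+xy^-1)y)^(-1) = y^-1 (1+xy^-1)^(-1).\<close>
definition sinv1 :: "complex \<Rightarrow> complex \<Rightarrow> eser" where
  "sinv1 q p = smul q p (smono 0 (-1)) (sgeo q p (smul q p (smono 1 0) (smono 0 (-1))))"

text \<open>(x+y)^(-1) in C[[x,x^-1,y]]: (x(1+x^-1y))^(-1) = (1+x^-1y)^(-1) x^-1.\<close>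
definition sinv2 :: "complex \<Rightarrow> complex \<Rightarrow> eser" where
  "sinv2 q p = smul q p (sgeo q p (smul q p (smono (-1) 0) (smono 0 1))) (smono (-1) 0)"

text \<open>(x+y)^n in C[[x,y,y^-1]] resp. C[[x,x^-1,y]].\<close>
definition xy_pow1 :: "complex \<Rightarrow> complex \<Rightarrow> int \<Rightarrow> eser" where
  "xy_pow1 q p n = (if 0 \<le> n then spow q p (sadd (smono 1 0) (smono 0 1)) (nat n)
                    else spow q p (sinv1 q p) (nat (- n)))"

definition xy_pow2 :: "complex \<Rightarrow> complex \<Rightarrow> int \<Rightarrow> eser" where
  "xy_pow2 q p n = (if 0 \<le> n then spow q p (sadd (smono 1 0) (smono 0 1)) (nat n)
                    else spow q p (sinv2 q p) (nat (- n)))"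

definition xy_coeff :: "complex \<Rightarrow> complex \<Rightarrow> int \<Rightarrow> int \<Rightarrow> (complex \<Rightarrow> complex \<Rightarrow> complex)" where
  "xy_coeff q p n k = (if 0 \<le> k then xy_pow1 q p n k (n - k) else xy_pow2 q p n k (n - k))"

definition generic_pt :: "complex \<Rightarrow> complex \<Rightarrow> complex \<Rightarrow> complex \<Rightarrow> bool" where
  "generic_pt q p a b \<longleftrightarrow> a \<noteq> 0 \<and> b \<noteq> 0 \<and>
     (\<forall>i::int. theta (a * q powi i) p \<noteq> 0 \<and> theta (b * q powi i) p \<noteq> 0 \<and> theta (a * q powi i / b) p \<noteq> 0)"

end

(*
  For every integer n, (x + y)^(n+1) = (x + y)^n (x + y) in both completions: for n >= 0 this
  is the definition of the power, and for n < 0 it holds because the geometric series defining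
  (x + y)^(-1) is a right inverse of x + y and a product (A B)(x + y) may be re-associated.  The
  re-association rests on a cocycle identity between the commutation factors Phi and the weights W,
  and it needs W to be invertible, i.e. the theta factors of w to be nonzero along the q-shift
  orbit of (a, b).
  Reading off the coefficient of x^k y^(n+1-k) in (x + y)^n (x + y) gives exactly the recurrence
  of the elliptic binomial coefficients, the boundary values 1 propagate from n = 0, and the
  recurrence has a unique solution with these boundary values because all weights are nonzero.
*)
theory Submission
  imports Defs
begin

definition supp_in :: "(int \<times> int) set \<Rightarrow> eser \<Rightarrow> bool" where
  "supp_in S c \<longleftrightarrow> (\<forall>k l. c k l \<noteq> (\<lambda>a b. 0) \<longrightarrow> (k, l) \<in> S)"

definition ray_x :: "int \<Rightarrow> (int \<times> int) set" where
  "ray_x N = {(k, l). 0 \<le> k \<and> k + l = N}"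

definition ray_y :: "int \<Rightarrow> (int \<times> int) set" where
  "ray_y N = {(k, l). 0 \<le> l \<and> k + l = N}"

definition smul_finite :: "eser \<Rightarrow> eser \<Rightarrow> bool" where
  "smul_finite c d \<longleftrightarrow>
     (\<forall>k l. finite {(k1, l1). c k1 l1 \<noteq> (\<lambda>a b. 0) \<and> d (k - k1) (l - l1) \<noteq> (\<lambda>a b. 0)})"

abbreviation sxy :: eser where
  "sxy \<equiv> sadd (smono 1 0) (smono 0 1)"

lemma gprod_1_0 [simp]: "gprod A 1 0 = 1"
  by (simp add: gprod_def)

lemma gprod_1_1 [simp]: "gprod A 1 1 = A 1"
  by (simp add: gprod_def)

lemma gprod_const_1 [simp]: "gprod (\<lambda>j. 1) l m = 1"
  by (simp add: gprod_def)

lemma gprod_nonzero: "(\<And>j. A j \<noteq> 0) \<Longrightarrow> gprod A l m \<noteq> 0"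
  by (simp add: gprod_def)

lemma eW_0 [simp]: "eW a b q p s 0 = 1"
  by (simp add: eW_def)

lemma ePhi_0 [simp]: "ePhi q p l 0 a b = 1"
  by (simp add: ePhi_def)

lemma ePhi_0_left [simp]: "ePhi q p 0 m a b = 1"
  by (simp add: ePhi_def)

lemma gprod_extend_right:
  assumes "\<And>j. A j \<noteq> 0"
  shows "gprod A l (m + 1) = gprod A l m * A (m + 1)"
proof -
  consider "l - 1 \<le> m" | "m = l - 2" | "m \<le> l - 3" by linarith
  then show ?thesis
  proof cases
    case 1
    then have "{l..m + 1} = insert (m + 1) {l..m}" by auto
    with 1 show ?thesis by (simp add: gprod_def mult.commute)
  next
    case 2
    then show ?thesis using assms[of "l - 1"] by (simp add: gprod_def)
  next
    case 3
    then have "{m + 1..l - 1} = insert (m + 1) {m + 1 + 1..l - 1}" by auto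
    with 3 show ?thesis using assms[of "m + 1"] by (simp add: gprod_def field_simps)
  qed
qed

lemma gprod_1_add:
  assumes nz: "\<And>j. A j \<noteq> 0"
  shows "gprod A 1 (s + t) = gprod A 1 s * gprod (\<lambda>i. A (i + s)) 1 t"
proof (induction t rule: int_induct[where k = 0])
  case base
  then show ?case by (simp add: gprod_def)
next
  case (step1 t)
  then show ?case
    using gprod_extend_right[of A 1 "s + t"] gprod_extend_right[of "\<lambda>i. A (i + s)" 1 t] nz
    by (simp add: ac_simps)
next
  case (step2 t)
  have "gprod A 1 (s + (t - 1)) * A (s + t) = gprod A 1 s * gprod (\<lambda>i. A (i + s)) 1 (t - 1) * A (s + t)"
    using step2(2) gprod_extend_right[of A 1 "s + (t - 1)"] gprod_extend_right[of "\<lambda>i. A (i + s)" 1 "t - 1"] nz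
    by (simp add: ac_simps)
  then show ?case using nz[of "s + t"] by simp
qed

section \<open>Uniqueness for the twisted Pascal recurrence\<close>

lemma pascal_solution_zero:
  fixes Z w :: "int \<Rightarrow> int \<Rightarrow> 'a::idom"
  assumes Z0: "\<And>n. Z n 0 = 0" and Zn: "\<And>n. Z n n = 0"
    and rec: "\<And>n k. (n + 1, k) \<noteq> (0, 0) \<Longrightarrow> Z (n + 1) k = Z n k + Z n (k - 1) * w k (n + 1 - k)"
    and w: "\<And>k t. w k t \<noteq> 0"
  shows "Z n k = 0"
proof -
  have above: "Z n (n + int j) = 0" for n j
  proof (induction j arbitrary: n)
    case 0
    show ?case using Zn by simp
  next
    case (Suc j)
    show ?case
    proof (cases "(n + 1, n + 1 + int j) = (0, 0)")
      case True
      then show ?thesis using Z0 by auto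
    next
      case False
      from rec[OF False] Suc.IH[of "n + 1"] Suc.IH[of n] show ?thesis by (simp add: algebra_simps)
    qed
  qed
  have below: "Z n (- int j) = 0" for n j
  proof (induction j arbitrary: n)
    case 0
    show ?case using Z0 by simp
  next
    case (Suc j)
    show ?case
    proof (cases "(n + 1, - int j) = (0, 0)")
      case True
      then have "n = -1" "j = 0" by simp_all
      then show ?thesis using Zn[of "-1"] by simp
    next
      case False
      have "Z n (- int j - 1) = 0" using rec[OF False] Suc.IH[of "n + 1"] Suc.IH[of n] w by simp
      moreover have "- int (Suc j) = - int j - 1" by simp
      ultimately show ?thesis by (simp only:)
    qed
  qed
  have nonneg: "Z (int m) k = 0" for m k
  proof (induction m arbitrary: k)
    case 0
    show ?case using above[of 0 "nat k"] below[of 0 "nat (- k)"] by (cases "0 \<le> k") simp_all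
  next
    case (Suc m)
    show ?case using rec[of "int m" k] Suc.IH by (simp add: add.commute)
  qed
  show ?thesis
  proof (cases "0 \<le> n")
    case True
    then show ?thesis using nonneg[of "nat n" k] by simp
  next
    case False
    then show ?thesis using above[of n "nat (k - n)"] below[of n "nat (- k)"] by (cases "n \<le> k") simp_all
  qed
qed

lemma supp_in_mono: "supp_in S c \<Longrightarrow> S \<subseteq> T \<Longrightarrow> supp_in T c"
  by (auto simp: supp_in_def)

lemma supp_in_zero: "supp_in S c \<Longrightarrow> (k, l) \<notin> S \<Longrightarrow> c k l a b = 0"
  unfolding supp_in_def by metis

lemma supp_in_smono: "supp_in {(i, j)} (smono i j)"
  by (auto simp: supp_in_def smono_def)

lemma supp_in_sone: "supp_in {(0, 0)} sone"
  by (auto simp: supp_in_def sone_def)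

lemma supp_in_sxy: "supp_in {(1, 0), (0, 1)} sxy"
  by (auto simp: supp_in_def sadd_def smono_def)

lemma smul_eq_sum_over:
  assumes "finite T"
    and "{(k1, l1). c k1 l1 \<noteq> (\<lambda>a b. 0) \<and> d (k - k1) (l - l1) \<noteq> (\<lambda>a b. 0)} \<subseteq> T"
  shows "smul q p c d k l a b = (\<Sum>(k1, l1)\<in>T.
    c k1 l1 a b * d (k - k1) (l - l1) (a * q powi (k1 + 2 * l1)) (b * q powi (2 * k1 + l1))
    * ePhi q p l1 (k - k1) (a * q powi k1) (b * q powi (2 * k1)))"
  unfolding smul_def by (rule sum.mono_neutral_left[OF assms]) auto

lemma smul_eq_sum_left:
  assumes "finite C" and "supp_in C c"
  shows "smul q p c d k l a b = (\<Sum>(k1, l1)\<in>C.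
    c k1 l1 a b * d (k - k1) (l - l1) (a * q powi (k1 + 2 * l1)) (b * q powi (2 * k1 + l1))
    * ePhi q p l1 (k - k1) (a * q powi k1) (b * q powi (2 * k1)))"
  using assms by (intro smul_eq_sum_over) (auto simp: supp_in_def)

lemma smul_eq_sum_right:
  assumes "finite D" and "supp_in D d"
  shows "smul q p c d k l a b = (\<Sum>(k2, l2)\<in>D.
    c (k - k2) (l - l2) a b
    * d k2 l2 (a * q powi (k - k2 + 2 * (l - l2))) (b * q powi (2 * (k - k2) + (l - l2)))
    * ePhi q p (l - l2) k2 (a * q powi (k - k2)) (b * q powi (2 * (k - k2))))"
proof -
  let ?f = "\<lambda>(k2, l2). (k - k2, l - l2)"
  have "{(k1, l1). c k1 l1 \<noteq> (\<lambda>a b. 0) \<and> d (k - k1) (l - l1) \<noteq> (\<lambda>a b. 0)} \<subseteq> ?f ` D"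
    using assms(2) by (force simp: supp_in_def image_iff)
  then have "smul q p c d k l a b = (\<Sum>(k1, l1)\<in>?f ` D.
    c k1 l1 a b * d (k - k1) (l - l1) (a * q powi (k1 + 2 * l1)) (b * q powi (2 * k1 + l1))
    * ePhi q p l1 (k - k1) (a * q powi k1) (b * q powi (2 * k1)))"
    using assms(1) by (intro smul_eq_sum_over) simp_all
  also have "\<dots> = (\<Sum>(k2, l2)\<in>D.
    c (k - k2) (l - l2) a b
    * d k2 l2 (a * q powi (k - k2 + 2 * (l - l2))) (b * q powi (2 * (k - k2) + (l - l2)))
    * ePhi q p (l - l2) k2 (a * q powi (k - k2)) (b * q powi (2 * (k - k2))))"
    by (subst sum.reindex) (auto simp: inj_on_def case_prod_beta)
  finally show ?thesis .
qed

lemma supp_in_smul: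
  assumes "supp_in S c" and "supp_in T d"
    and "\<And>k1 l1 k2 l2. (k1, l1) \<in> S \<Longrightarrow> (k2, l2) \<in> T \<Longrightarrow> (k1 + k2, l1 + l2) \<in> U"
  shows "supp_in U (smul q p c d)"
  unfolding supp_in_def
proof (intro allI impI)
  fix k l
  assume nz: "smul q p c d k l \<noteq> (\<lambda>a b. 0)"
  have "{(k1, l1). c k1 l1 \<noteq> (\<lambda>a b. 0) \<and> d (k - k1) (l - l1) \<noteq> (\<lambda>a b. 0)} \<noteq> {}"
  proof
    assume "{(k1, l1). c k1 l1 \<noteq> (\<lambda>a b. 0) \<and> d (k - k1) (l - l1) \<noteq> (\<lambda>a b. 0)} = {}"
    then have "smul q p c d k l = (\<lambda>a b. 0)" unfolding smul_def by (simp only:) simp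
    with nz show False ..
  qed
  then obtain k1 l1 where "c k1 l1 \<noteq> (\<lambda>a b. 0)" "d (k - k1) (l - l1) \<noteq> (\<lambda>a b. 0)" by blast
  then have "(k1, l1) \<in> S" "(k - k1, l - l1) \<in> T" using assms(1,2) by (auto simp: supp_in_def)
  from assms(3)[OF this] show "(k, l) \<in> U" by simp
qed

lemma supp_in_ray_x_smul:
  "supp_in (ray_x N) c \<Longrightarrow> supp_in (ray_x M) d \<Longrightarrow> supp_in (ray_x (N + M)) (smul q p c d)"
  by (erule supp_in_smul) (auto simp: ray_x_def)

lemma supp_in_ray_y_smul:
  "supp_in (ray_y N) c \<Longrightarrow> supp_in (ray_y M) d \<Longrightarrow> supp_in (ray_y (N + M)) (smul q p c d)"
  by (erule supp_in_smul) (auto simp: ray_y_def)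

lemma supp_in_ray_x_spow: "supp_in (ray_x N) s \<Longrightarrow> supp_in (ray_x (int m * N)) (spow q p s m)"
proof (induction m)
  case 0
  show ?case by (simp add: supp_in_mono[OF supp_in_sone] ray_x_def)
next
  case (Suc m)
  show ?case using supp_in_ray_x_smul[OF Suc.IH[OF Suc.prems] Suc.prems] by (simp add: algebra_simps)
qed

lemma supp_in_ray_y_spow: "supp_in (ray_y N) s \<Longrightarrow> supp_in (ray_y (int m * N)) (spow q p s m)"
proof (induction m)
  case 0
  show ?case by (simp add: supp_in_mono[OF supp_in_sone] ray_y_def)
next
  case (Suc m)
  show ?case using supp_in_ray_y_smul[OF Suc.IH[OF Suc.prems] Suc.prems] by (simp add: algebra_simps)
qed

lemma smul_finite_supp_left: "finite C \<Longrightarrow> supp_in C c \<Longrightarrow> smul_finite c d"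
  unfolding smul_finite_def supp_in_def by (auto elim!: finite_subset[rotated])

lemma smul_finite_ray_x: "supp_in (ray_x N) c \<Longrightarrow> supp_in (ray_x M) d \<Longrightarrow> smul_finite c d"
  unfolding smul_finite_def
proof (intro allI)
  fix k l
  assume "supp_in (ray_x N) c" "supp_in (ray_x M) d"
  then have "{(k1, l1). c k1 l1 \<noteq> (\<lambda>a b. 0) \<and> d (k - k1) (l - l1) \<noteq> (\<lambda>a b. 0)}
      \<subseteq> (\<lambda>k1. (k1, N - k1)) ` {0..k}"
    by (force simp: supp_in_def ray_x_def image_iff)
  then show "finite {(k1, l1). c k1 l1 \<noteq> (\<lambda>a b. 0) \<and> d (k - k1) (l - l1) \<noteq> (\<lambda>a b. 0)}"
    by (rule finite_subset) simp
qed

lemma smul_finite_ray_y: "supp_in (ray_y N) c \<Longrightarrow> supp_in (ray_y M) d \<Longrightarrow> smul_finite c d"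
  unfolding smul_finite_def
proof (intro allI)
  fix k l
  assume "supp_in (ray_y N) c" "supp_in (ray_y M) d"
  then have "{(k1, l1). c k1 l1 \<noteq> (\<lambda>a b. 0) \<and> d (k - k1) (l - l1) \<noteq> (\<lambda>a b. 0)}
      \<subseteq> (\<lambda>l1. (N - l1, l1)) ` {0..l}"
    by (force simp: supp_in_def ray_y_def image_iff)
  then show "finite {(k1, l1). c k1 l1 \<noteq> (\<lambda>a b. 0) \<and> d (k - k1) (l - l1) \<noteq> (\<lambda>a b. 0)}"
    by (rule finite_subset) simp
qed

section \<open>Monomials and geometric series\<close>

lemma smul_smono_left:
  "smul q p (smono i j) d k l a b = d (k - i) (l - j) (a * q powi (i + 2 * j)) (b * q powi (2 * i + j))
    * ePhi q p j (k - i) (a * q powi i) (b * q powi (2 * i))"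
  by (subst smul_eq_sum_left[OF _ supp_in_smono]) (simp_all add: smono_def)

lemma smul_smono_smono:
  "j = 0 \<or> i' = 0 \<Longrightarrow> smul q p (smono i j) (smono i' j') = smono (i + i') (j + j')"
  unfolding fun_eq_iff smul_smono_left by (auto simp: smono_def)

lemma smul_sone: "smul q p c sone = c"
  by (intro ext, subst smul_eq_sum_right[OF _ supp_in_sone]) (simp_all add: sone_def)

lemma supp_in_spow_sneg_smono:
  "supp_in {(int j * e1, int j * e2)} (spow q p (sneg (smono e1 e2)) j)"
proof (induction j)
  case 0
  show ?case using supp_in_sone by simp
next
  case (Suc j)
  have "supp_in {(e1, e2)} (sneg (smono e1 e2))" by (simp add: supp_in_def sneg_def smono_def)
  with Suc.IH show ?case by (auto elim!: supp_in_smul simp: algebra_simps)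
qed

lemma spow_sneg_smono_Suc:
  "spow q p (sneg (smono e1 e2)) (Suc j) k l a b =
   - spow q p (sneg (smono e1 e2)) j (k - e1) (l - e2) a b
     * ePhi q p (l - e2) e1 (a * q powi (k - e1)) (b * q powi (2 * (k - e1)))"
  by (simp only: spow.simps, subst smul_eq_sum_right[where D = "{(e1, e2)}"])
     (auto simp: supp_in_def sneg_def smono_def)

lemma sgeo_smono_on_ray:
  assumes "(e1, e2) \<noteq> (0, 0)"
  shows "sgeo q p (smono e1 e2) (int j * e1) (int j * e2) a b
    = spow q p (sneg (smono e1 e2)) j (int j * e1) (int j * e2) a b"
proof -
  let ?F = "\<lambda>i. spow q p (sneg (smono e1 e2)) i (int j * e1) (int j * e2)"
  have "{i. ?F i \<noteq> (\<lambda>a b. 0)} \<subseteq> {j}"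
  proof
    fix i
    assume "i \<in> {i. ?F i \<noteq> (\<lambda>a b. 0)}"
    then have "(int j - int i) * e1 = 0 \<and> (int j - int i) * e2 = 0"
      using supp_in_spow_sneg_smono[where j = j] supp_in_spow_sneg_smono[where j = i]
      by (auto simp: supp_in_def algebra_simps)
    with assms show "i \<in> {j}" by auto
  qed
  then have "sgeo q p (smono e1 e2) (int j * e1) (int j * e2) a b = (\<Sum>i\<in>{j}. ?F i a b)"
    unfolding sgeo_def ssum_def by (intro sum.mono_neutral_left) auto
  then show ?thesis by simp
qed

lemma sgeo_smono_off_ray:
  assumes "\<And>j. (k, l) \<noteq> (int j * e1, int j * e2)"
  shows "sgeo q p (smono e1 e2) k l a b = 0"
proof -
  have "{j. spow q p (sneg (smono e1 e2)) j k l \<noteq> (\<lambda>a b. 0)} = {}"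
    using supp_in_spow_sneg_smono assms by (fastforce simp: supp_in_def)
  then show ?thesis by (simp add: sgeo_def ssum_def)
qed

lemma supp_in_sgeo_smono: "supp_in (range (\<lambda>j. (int j * e1, int j * e2))) (sgeo q p (smono e1 e2))"
  unfolding supp_in_def
proof (intro allI impI)
  fix k l
  assume "sgeo q p (smono e1 e2) k l \<noteq> (\<lambda>a b. 0)"
  then obtain a b where "sgeo q p (smono e1 e2) k l a b \<noteq> 0" by blast
  then show "(k, l) \<in> range (\<lambda>j. (int j * e1, int j * e2))" using sgeo_smono_off_ray by blast
qed

lemma sgeo_smono_rec:
  assumes e: "(e1, e2) \<noteq> (0, 0)" and kl: "(k, l) \<noteq> (0, 0)"
  shows "sgeo q p (smono e1 e2) k l a b =
    - sgeo q p (smono e1 e2) (k - e1) (l - e2) a b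
      * ePhi q p (l - e2) e1 (a * q powi (k - e1)) (b * q powi (2 * (k - e1)))"
proof (cases "\<exists>j. (k, l) = (int j * e1, int j * e2)")
  case True
  then obtain j where j: "(k, l) = (int j * e1, int j * e2)" by blast
  with kl obtain i where i: "j = Suc i" by (cases j) auto
  with j have k1: "k - e1 = int i * e1" and l1: "l - e2 = int i * e2" by (simp_all add: algebra_simps)
  have "sgeo q p (smono e1 e2) k l a b = spow q p (sneg (smono e1 e2)) (Suc i) k l a b"
    using sgeo_smono_on_ray[OF e, where j = j] j i by simp
  also have "\<dots> = - spow q p (sneg (smono e1 e2)) i (k - e1) (l - e2) a b
      * ePhi q p (l - e2) e1 (a * q powi (k - e1)) (b * q powi (2 * (k - e1)))"
    by (rule spow_sneg_smono_Suc)
  also have "spow q p (sneg (smono e1 e2)) i (k - e1) (l - e2) a b = sgeo q p (smono e1 e2) (k - e1) (l - e2) a b"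
    unfolding k1 l1 by (rule sgeo_smono_on_ray[OF e, symmetric])
  finally show ?thesis .
next
  case False
  have "(k - e1, l - e2) \<noteq> (int i * e1, int i * e2)" for i
  proof
    assume "(k - e1, l - e2) = (int i * e1, int i * e2)"
    then have "(k, l) = (int (Suc i) * e1, int (Suc i) * e2)" by (simp add: algebra_simps)
    with False show False by blast
  qed
  then show ?thesis using False by (simp add: sgeo_smono_off_ray)
qed

lemma sgeo_smono_inverse:
  assumes e: "(e1, e2) \<noteq> (0, 0)"
  shows "smul q p (sgeo q p (smono e1 e2)) (sadd (smono e1 (f + e2)) (smono 0 f)) = smono 0 f"
proof (intro ext)
  fix k l a b
  let ?G = "sgeo q p (smono e1 e2)"
  have "(e1, f + e2) \<noteq> (0, f)" using e by auto
  then have "smul q p ?G (sadd (smono e1 (f + e2)) (smono 0 f)) k l a b =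
      ?G (k - e1) (l - f - e2) a b * ePhi q p (l - f - e2) e1 (a * q powi (k - e1)) (b * q powi (2 * (k - e1)))
      + ?G k (l - f) a b"
    by (subst smul_eq_sum_right[where D = "{(e1, f + e2), (0, f)}"])
       (auto simp: supp_in_def sadd_def smono_def algebra_simps)
  also have "\<dots> = smono 0 f k l a b"
  proof (cases "(k, l - f) = (0, 0)")
    case True
    have "(- e1, - e2) \<noteq> (int j * e1, int j * e2)" for j
    proof
      assume "(- e1, - e2) = (int j * e1, int j * e2)"
      then have "(int j + 1) * e1 = 0" "(int j + 1) * e2 = 0" by (simp_all add: algebra_simps)
      with e show False by simp
    qed
    then have "?G (- e1) (- e2) a b = 0" by (rule sgeo_smono_off_ray)
    moreover have "?G 0 0 a b = 1" using sgeo_smono_on_ray[OF e, where j = 0] by (simp add: sone_def)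
    ultimately show ?thesis using True by (simp add: smono_def)
  next
    case False
    then show ?thesis using sgeo_smono_rec[OF e False] by (auto simp: smono_def algebra_simps)
  qed
  finally show "smul q p ?G (sadd (smono e1 (f + e2)) (smono 0 f)) k l a b = smono 0 f k l a b" .
qed

lemma sinv1_eq: "sinv1 q p = smul q p (smono 0 (-1)) (sgeo q p (smono 1 (-1)))"
  unfolding sinv1_def by (simp add: smul_smono_smono)

lemma sinv2_eq: "sinv2 q p = smul q p (sgeo q p (smono (-1) 1)) (smono (-1) 0)"
  unfolding sinv2_def by (simp add: smul_smono_smono)

lemma supp_in_ray_x_sxy: "supp_in (ray_x 1) sxy"
  by (rule supp_in_mono[OF supp_in_sxy]) (auto simp: ray_x_def)

lemma supp_in_ray_y_sxy: "supp_in (ray_y 1) sxy"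
  by (rule supp_in_mono[OF supp_in_sxy]) (auto simp: ray_y_def)

lemma supp_in_ray_x_sgeo: "supp_in (ray_x 0) (sgeo q p (smono 1 (-1)))"
  by (rule supp_in_mono[OF supp_in_sgeo_smono]) (auto simp: ray_x_def)

lemma supp_in_ray_y_sgeo: "supp_in (ray_y 0) (sgeo q p (smono (-1) 1))"
  by (rule supp_in_mono[OF supp_in_sgeo_smono]) (auto simp: ray_y_def)

lemma supp_in_sinv1: "supp_in (ray_x (-1)) (sinv1 q p)"
proof -
  have "supp_in (ray_x (-1)) (smono 0 (-1))"
    by (rule supp_in_mono[OF supp_in_smono]) (simp add: ray_x_def)
  from supp_in_ray_x_smul[OF this supp_in_ray_x_sgeo] show ?thesis by (simp add: sinv1_eq)
qed

lemma supp_in_sinv2: "supp_in (ray_y (-1)) (sinv2 q p)"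
proof -
  have "supp_in (ray_y (-1)) (smono (-1) 0)"
    by (rule supp_in_mono[OF supp_in_smono]) (simp add: ray_y_def)
  from supp_in_ray_y_smul[OF supp_in_ray_y_sgeo this] show ?thesis by (simp add: sinv2_eq)
qed

lemma xy_pow1_nonneg: "0 \<le> n \<Longrightarrow> xy_pow1 q p n = spow q p sxy (nat n)"
  by (simp add: xy_pow1_def)

lemma xy_pow1_nonpos: "n \<le> 0 \<Longrightarrow> xy_pow1 q p n = spow q p (sinv1 q p) (nat (- n))"
  by (cases "n = 0") (simp_all add: xy_pow1_def)

lemma xy_pow2_nonneg: "0 \<le> n \<Longrightarrow> xy_pow2 q p n = spow q p sxy (nat n)"
  by (simp add: xy_pow2_def)

lemma xy_pow2_nonpos: "n \<le> 0 \<Longrightarrow> xy_pow2 q p n = spow q p (sinv2 q p) (nat (- n))"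
  by (cases "n = 0") (simp_all add: xy_pow2_def)

lemma xy_pow2_eq_xy_pow1: "0 \<le> n \<Longrightarrow> xy_pow2 q p n = xy_pow1 q p n"
  by (simp add: xy_pow1_nonneg xy_pow2_nonneg)

lemma supp_in_xy_pow1: "supp_in (ray_x n) (xy_pow1 q p n)"
proof (cases "0 \<le> n")
  case True
  then show ?thesis using supp_in_ray_x_spow[OF supp_in_ray_x_sxy, of "nat n"] by (simp add: xy_pow1_nonneg)
next
  case False
  then show ?thesis using supp_in_ray_x_spow[OF supp_in_sinv1, of "nat (- n)"] by (simp add: xy_pow1_nonpos)
qed

lemma supp_in_xy_pow2: "supp_in (ray_y n) (xy_pow2 q p n)"
proof (cases "0 \<le> n")
  case True
  then show ?thesis using supp_in_ray_y_spow[OF supp_in_ray_y_sxy, of "nat n"] by (simp add: xy_pow2_nonneg)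
next
  case False
  then show ?thesis using supp_in_ray_y_spow[OF supp_in_sinv2, of "nat (- n)"] by (simp add: xy_pow2_nonpos)
qed

section \<open>The binomial recurrence at generic points\<close>

context
  fixes q :: complex
  assumes q_nonzero: "q \<noteq> 0"
begin

lemma mult_powi_powi: "x * q powi m * q powi n = x * q powi (m + n)"
  by (simp add: power_int_add q_nonzero mult.assoc)

lemma divide_mult_powi: "x * q powi m / (y * q powi n) = x * q powi (m - n) / y"
  by (simp add: power_int_diff q_nonzero)

lemma ew_shift:
  "ew (a * q powi (k + 2 * l)) (b * q powi (2 * k + l)) q p s t = ew a b q p (s + k) (t + l)"
  unfolding ew_def mult_powi_powi divide_mult_powi by (simp add: algebra_simps)

lemma generic_pt_shift:
  assumes "generic_pt q p a b"
  shows "generic_pt q p (a * q powi u) (b * q powi v)"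
  using assms q_nonzero unfolding generic_pt_def mult_powi_powi divide_mult_powi by auto

lemma ew_nonzero: "generic_pt q p a b \<Longrightarrow> ew a b q p s t \<noteq> 0"
  by (simp add: generic_pt_def ew_def q_nonzero)

lemma eW_nonzero: "generic_pt q p a b \<Longrightarrow> eW a b q p s t \<noteq> 0"
  unfolding eW_def by (intro gprod_nonzero ew_nonzero)

lemma eW_shift:
  "eW (a * q powi (k + 2 * l)) (b * q powi (2 * k + l)) q p s t = gprod (\<lambda>j. ew a b q p (s + k) (j + l)) 1 t"
  by (simp add: eW_def ew_shift)

lemma eW_shift_x: "eW (a * q powi k) (b * q powi (2 * k)) q p s t = eW a b q p (s + k) t"
  using eW_shift[where l = 0] by (simp add: eW_def)

lemma ePhi_shift_x:
  "ePhi q p l m (a * q powi k) (b * q powi (2 * k)) = gprod (\<lambda>j. eW a b q p (j + k) l) 1 m"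
  by (simp add: ePhi_def eW_shift_x)

lemma smul_sxy: "smul q p c sxy k l a b = c k (l - 1) a b + c (k - 1) l a b * eW a b q p k l"
proof -
  have "smul q p c sxy k l a b = c (k - 1) l a b * ePhi q p l 1 (a * q powi (k - 1)) (b * q powi (2 * (k - 1)))
      + c k (l - 1) a b"
    by (subst smul_eq_sum_right[OF _ supp_in_sxy]) (simp_all add: sadd_def smono_def)
  then show ?thesis unfolding ePhi_shift_x by simp
qed

lemma ePhi_eW_cocycle:
  assumes gen: "generic_pt q p a b"
  shows "ePhi q p l1 (k - 1 - k1) (a * q powi k1) (b * q powi (2 * k1)) * eW a b q p k l
    = eW (a * q powi (k1 + 2 * l1)) (b * q powi (2 * k1 + l1)) q p (k - k1) (l - l1)
      * ePhi q p l1 (k - k1) (a * q powi k1) (b * q powi (2 * k1))"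
proof -
  have "ePhi q p l1 (k - k1) (a * q powi k1) (b * q powi (2 * k1))
      = ePhi q p l1 (k - 1 - k1) (a * q powi k1) (b * q powi (2 * k1)) * eW a b q p k l1"
    using gprod_extend_right[of "\<lambda>j. eW a b q p (j + k1) l1" 1 "k - 1 - k1"] eW_nonzero[OF gen]
    unfolding ePhi_shift_x by simp
  moreover have "eW a b q p k l
      = eW a b q p k l1 * gprod (\<lambda>j. ew a b q p (k - k1 + k1) (j + l1)) 1 (l - l1)"
    using gprod_1_add[of "ew a b q p k" l1 "l - l1"] ew_nonzero[OF gen] by (simp add: eW_def)
  ultimately show ?thesis unfolding eW_shift by (simp only: mult_ac)
qed

lemma smul_sxy_nonzero:
  "smul q p B sxy k l \<noteq> (\<lambda>a b. 0) \<Longrightarrow> B k (l - 1) \<noteq> (\<lambda>a b. 0) \<or> B (k - 1) l \<noteq> (\<lambda>a b. 0)"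
  by (fastforce simp: fun_eq_iff smul_sxy)

lemma smul_assoc_sxy:
  assumes gen: "generic_pt q p a b" and fin: "smul_finite A B"
  shows "smul q p (smul q p A B) sxy k l a b = smul q p A (smul q p B sxy) k l a b"
proof -
  define S where "S = {(k1, l1). A k1 l1 \<noteq> (\<lambda>a b. 0) \<and> B (k - k1) (l - 1 - l1) \<noteq> (\<lambda>a b. 0)}
      \<union> {(k1, l1). A k1 l1 \<noteq> (\<lambda>a b. 0) \<and> B (k - 1 - k1) (l - l1) \<noteq> (\<lambda>a b. 0)}"
  have fin_S: "finite S" using fin by (simp add: S_def smul_finite_def)
  define sa where "sa = (\<lambda>k1 l1. a * q powi (k1 + 2 * l1))"
  define sb where "sb = (\<lambda>k1 l1. b * q powi (2 * k1 + l1))"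
  define Ph where "Ph = (\<lambda>k1 l1 m. ePhi q p l1 m (a * q powi k1) (b * q powi (2 * k1)))"
  have L1: "smul q p A B k (l - 1) a b
      = (\<Sum>(k1, l1)\<in>S. A k1 l1 a b * B (k - k1) (l - 1 - l1) (sa k1 l1) (sb k1 l1) * Ph k1 l1 (k - k1))"
    unfolding sa_def sb_def Ph_def by (rule smul_eq_sum_over[OF fin_S]) (auto simp: S_def)
  have L2: "smul q p A B (k - 1) l a b
      = (\<Sum>(k1, l1)\<in>S. A k1 l1 a b * B (k - 1 - k1) (l - l1) (sa k1 l1) (sb k1 l1) * Ph k1 l1 (k - 1 - k1))"
    unfolding sa_def sb_def Ph_def by (rule smul_eq_sum_over[OF fin_S]) (auto simp: S_def)
  have R: "smul q p A (smul q p B sxy) k l a b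
      = (\<Sum>(k1, l1)\<in>S. A k1 l1 a b * smul q p B sxy (k - k1) (l - l1) (sa k1 l1) (sb k1 l1) * Ph k1 l1 (k - k1))"
    unfolding sa_def sb_def Ph_def
    by (rule smul_eq_sum_over[OF fin_S]) (auto simp: S_def algebra_simps dest!: smul_sxy_nonzero)
  have "smul q p (smul q p A B) sxy k l a b
      = smul q p A B k (l - 1) a b + smul q p A B (k - 1) l a b * eW a b q p k l"
    by (rule smul_sxy)
  also have "\<dots> = (\<Sum>(k1, l1)\<in>S. A k1 l1 a b * smul q p B sxy (k - k1) (l - l1) (sa k1 l1) (sb k1 l1) * Ph k1 l1 (k - k1))"
    unfolding L1 L2 sum_distrib_right sum.distrib[symmetric]
  proof (rule sum.cong[OF refl], clarify)
    fix k1 l1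
    have "Ph k1 l1 (k - 1 - k1) * eW a b q p k l = eW (sa k1 l1) (sb k1 l1) q p (k - k1) (l - l1) * Ph k1 l1 (k - k1)"
      unfolding sa_def sb_def Ph_def by (rule ePhi_eW_cocycle[OF gen])
    then show "A k1 l1 a b * B (k - k1) (l - 1 - l1) (sa k1 l1) (sb k1 l1) * Ph k1 l1 (k - k1)
        + A k1 l1 a b * B (k - 1 - k1) (l - l1) (sa k1 l1) (sb k1 l1) * Ph k1 l1 (k - 1 - k1) * eW a b q p k l
      = A k1 l1 a b * smul q p B sxy (k - k1) (l - l1) (sa k1 l1) (sb k1 l1) * Ph k1 l1 (k - k1)"
      unfolding smul_sxy by (simp add: algebra_simps)
  qed
  also have "\<dots> = smul q p A (smul q p B sxy) k l a b" by (rule R[symmetric])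
  finally show ?thesis .
qed

text \<open>The hypothesis on \<open>d\<close> is only needed at generic points because the product evaluates \<open>d\<close>
  at q-shifts of \<open>(a, b)\<close>, which are generic again.\<close>

lemma smul_generic_right_unit:
  assumes gen: "generic_pt q p a b" and fin: "smul_finite c d"
    and unit: "\<And>k l a b. generic_pt q p a b \<Longrightarrow> d k l a b = sone k l a b"
  shows "smul q p c d k l a b = c k l a b"
proof -
  define T where "T = insert (k, l) {(k1, l1). c k1 l1 \<noteq> (\<lambda>a b. 0) \<and> d (k - k1) (l - l1) \<noteq> (\<lambda>a b. 0)}"
  have T: "finite T" using fin by (simp add: T_def smul_finite_def)
  have sub_d: "{(k1, l1). c k1 l1 \<noteq> (\<lambda>a b. 0) \<and> d (k - k1) (l - l1) \<noteq> (\<lambda>a b. 0)} \<subseteq> T"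
    by (auto simp: T_def)
  have sub_1: "{(k1, l1). c k1 l1 \<noteq> (\<lambda>a b. 0) \<and> sone (k - k1) (l - l1) \<noteq> (\<lambda>a b. 0)} \<subseteq> T"
    by (auto simp: T_def sone_def)
  have "smul q p c d k l a b = smul q p c sone k l a b"
    unfolding smul_eq_sum_over[OF T sub_d] smul_eq_sum_over[OF T sub_1]
    by (intro sum.cong refl) (clarsimp simp: unit generic_pt_shift[OF gen])
  then show ?thesis by (simp add: smul_sone)
qed

lemma spow_sxy_of_right_inverse:
  assumes gen: "generic_pt q p a b"
    and inv: "\<And>k l a b. generic_pt q p a b \<Longrightarrow> smul q p I sxy k l a b = sone k l a b"
    and fin: "smul_finite (spow q p I m) I" "smul_finite (spow q p I m) (smul q p I sxy)"
  shows "smul q p (spow q p I (Suc m)) sxy k l a b = spow q p I m k l a b"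
proof -
  have "smul q p (spow q p I (Suc m)) sxy k l a b = smul q p (spow q p I m) (smul q p I sxy) k l a b"
    using smul_assoc_sxy[OF gen fin(1)] by simp
  also have "\<dots> = spow q p I m k l a b"
    by (rule smul_generic_right_unit[OF gen fin(2) inv])
  finally show ?thesis .
qed

lemma sinv1_right_inverse:
  assumes gen: "generic_pt q p a b"
  shows "smul q p (sinv1 q p) sxy k l a b = sone k l a b"
proof -
  have "smul q p (sinv1 q p) sxy k l a b
      = smul q p (smono 0 (-1)) (smul q p (sgeo q p (smono 1 (-1))) sxy) k l a b"
    unfolding sinv1_eq by (rule smul_assoc_sxy[OF gen smul_finite_supp_left[OF _ supp_in_smono]]) simp
  moreover have "smul q p (sgeo q p (smono 1 (-1))) sxy = smono 0 1"
    using sgeo_smono_inverse[of 1 "-1" q p 1] by simp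
  ultimately show ?thesis by (simp add: smul_smono_smono) (simp add: sone_def smono_def)
qed

lemma sinv2_right_inverse:
  assumes gen: "generic_pt q p a b"
  shows "smul q p (sinv2 q p) sxy k l a b = sone k l a b"
proof -
  have "supp_in (ray_y (-1)) (smono (-1) 0)"
    by (rule supp_in_mono[OF supp_in_smono]) (simp add: ray_y_def)
  then have "smul q p (sinv2 q p) sxy k l a b
      = smul q p (sgeo q p (smono (-1) 1)) (smul q p (smono (-1) 0) sxy) k l a b"
    unfolding sinv2_eq by (intro smul_assoc_sxy[OF gen] smul_finite_ray_y[OF supp_in_ray_y_sgeo])
  moreover have "smul q p (smono (-1) 0) sxy = sadd (smono (-1) (0 + 1)) (smono 0 0)"
    unfolding fun_eq_iff smul_smono_left by (simp add: sadd_def smono_def)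
  moreover have "smul q p (sgeo q p (smono (-1) 1)) (sadd (smono (-1) (0 + 1)) (smono 0 0)) = smono 0 0"
    by (rule sgeo_smono_inverse) simp
  ultimately show ?thesis by (simp add: sone_def smono_def)
qed

lemma xy_pow1_succ:
  assumes gen: "generic_pt q p a b"
  shows "xy_pow1 q p (n + 1) k l a b = smul q p (xy_pow1 q p n) sxy k l a b"
proof (cases "0 \<le> n")
  case True
  then show ?thesis by (simp add: xy_pow1_nonneg nat_add_distrib)
next
  case False
  define m where "m = nat (- n - 1)"
  note supp_m = supp_in_ray_x_spow[OF supp_in_sinv1, of m]
  from False have "xy_pow1 q p (n + 1) = spow q p (sinv1 q p) m"
    and "xy_pow1 q p n = spow q p (sinv1 q p) (Suc m)"
    by (simp_all add: xy_pow1_nonpos m_def nat_diff_distrib' Suc_nat_eq_nat_zadd1)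
  moreover have "smul_finite (spow q p (sinv1 q p) m) (sinv1 q p)"
    using supp_m supp_in_sinv1 by (rule smul_finite_ray_x)
  moreover have "smul_finite (spow q p (sinv1 q p) m) (smul q p (sinv1 q p) sxy)"
    using supp_m supp_in_ray_x_smul[OF supp_in_sinv1 supp_in_ray_x_sxy] by (rule smul_finite_ray_x)
  ultimately show ?thesis using spow_sxy_of_right_inverse[OF gen sinv1_right_inverse] by simp
qed

lemma xy_pow2_succ:
  assumes gen: "generic_pt q p a b"
  shows "xy_pow2 q p (n + 1) k l a b = smul q p (xy_pow2 q p n) sxy k l a b"
proof (cases "0 \<le> n")
  case True
  then show ?thesis by (simp add: xy_pow2_nonneg nat_add_distrib)
next
  case False
  define m where "m = nat (- n - 1)"
  note supp_m = supp_in_ray_y_spow[OF supp_in_sinv2, of m]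
  from False have "xy_pow2 q p (n + 1) = spow q p (sinv2 q p) m"
    and "xy_pow2 q p n = spow q p (sinv2 q p) (Suc m)"
    by (simp_all add: xy_pow2_nonpos m_def nat_diff_distrib' Suc_nat_eq_nat_zadd1)
  moreover have "smul_finite (spow q p (sinv2 q p) m) (sinv2 q p)"
    using supp_m supp_in_sinv2 by (rule smul_finite_ray_y)
  moreover have "smul_finite (spow q p (sinv2 q p) m) (smul q p (sinv2 q p) sxy)"
    using supp_m supp_in_ray_y_smul[OF supp_in_sinv2 supp_in_ray_y_sxy] by (rule smul_finite_ray_y)
  ultimately show ?thesis using spow_sxy_of_right_inverse[OF gen sinv2_right_inverse] by simp
qed

lemma xy_pow1_rec:
  "generic_pt q p a b \<Longrightarrow>
    xy_pow1 q p (n + 1) k l a b = xy_pow1 q p n k (l - 1) a b + xy_pow1 q p n (k - 1) l a b * eW a b q p k l"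
  by (simp add: xy_pow1_succ smul_sxy)

lemma xy_pow2_rec:
  "generic_pt q p a b \<Longrightarrow>
    xy_pow2 q p (n + 1) k l a b = xy_pow2 q p n k (l - 1) a b + xy_pow2 q p n (k - 1) l a b * eW a b q p k l"
  by (simp add: xy_pow2_succ smul_sxy)

lemma xy_pow1_0_n:
  assumes gen: "generic_pt q p a b"
  shows "xy_pow1 q p n 0 n a b = 1"
proof (induction n rule: int_induct[where k = 0])
  case base
  show ?case by (simp add: xy_pow1_def sone_def)
next
  case (step1 n)
  have "xy_pow1 q p n (-1) (n + 1) a b = 0" by (rule supp_in_zero[OF supp_in_xy_pow1]) (simp add: ray_x_def)
  with step1 show ?case by (simp add: xy_pow1_rec[OF gen])
next
  case (step2 n)
  have "xy_pow1 q p (n - 1) (-1) n a b = 0" by (rule supp_in_zero[OF supp_in_xy_pow1]) (simp add: ray_x_def)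
  with step2 show ?case using xy_pow1_rec[OF gen, where n = "n - 1" and k = 0 and l = n] by simp
qed

lemma xy_pow2_n_0:
  assumes gen: "generic_pt q p a b"
  shows "xy_pow2 q p n n 0 a b = 1"
proof (induction n rule: int_induct[where k = 0])
  case base
  show ?case by (simp add: xy_pow2_def sone_def)
next
  case (step1 n)
  have "xy_pow2 q p n (n + 1) (-1) a b = 0" by (rule supp_in_zero[OF supp_in_xy_pow2]) (simp add: ray_y_def)
  with step1 show ?case by (simp add: xy_pow2_rec[OF gen])
next
  case (step2 n)
  have "xy_pow2 q p (n - 1) n (-1) a b = 0" by (rule supp_in_zero[OF supp_in_xy_pow2]) (simp add: ray_y_def)
  with step2 show ?case using xy_pow2_rec[OF gen, where n = "n - 1" and k = n and l = 0] by simp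
qed

lemma is_ebinom_xy_coeff:
  assumes gen: "generic_pt q p a b"
  shows "is_ebinom a b q p (\<lambda>n k. xy_coeff q p n k a b)"
  unfolding is_ebinom_def
proof (intro conjI allI impI)
  fix n
  show "xy_coeff q p n 0 a b = 1" by (simp add: xy_coeff_def xy_pow1_0_n[OF gen])
  show "xy_coeff q p n n a b = 1"
    using xy_pow2_n_0[OF gen, of n] by (cases "0 \<le> n") (simp_all add: xy_coeff_def xy_pow2_eq_xy_pow1)
next
  fix n k :: int
  assume nk: "(n + 1, k) \<noteq> (0, 0)"
  consider "0 < k" | "k < 0" | "k = 0" by linarith
  then show "xy_coeff q p (n + 1) k a b
      = xy_coeff q p n k a b + xy_coeff q p n (k - 1) a b * eW a b q p k (n + 1 - k)"
  proof cases
    case 1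
    then show ?thesis
      using xy_pow1_rec[OF gen, where n = n and k = k and l = "n + 1 - k"] by (simp add: xy_coeff_def algebra_simps)
  next
    case 2
    then show ?thesis
      using xy_pow2_rec[OF gen, where n = n and k = k and l = "n + 1 - k"] by (simp add: xy_coeff_def algebra_simps)
  next
    case 3
    have "xy_coeff q p n (-1) a b = 0"
    proof (cases "0 \<le> n")
      case True
      then show ?thesis
        by (simp add: xy_coeff_def xy_pow2_eq_xy_pow1 supp_in_zero[OF supp_in_xy_pow1] ray_x_def)
    next
      case False
      with nk 3 have "n + 1 < 0" by auto
      then show ?thesis by (simp add: xy_coeff_def supp_in_zero[OF supp_in_xy_pow2] ray_y_def)
    qed
    with 3 show ?thesis by (simp add: xy_coeff_def xy_pow1_0_n[OF gen])
  qed
qed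

lemma ebinom_eqI:
  assumes gen: "generic_pt q p a b" and C: "is_ebinom a b q p C"
  shows "ebinom a b q p = C"
  unfolding ebinom_def
proof (rule the_equality)
  show "is_ebinom a b q p C" by (rule C)
next
  fix D
  assume D: "is_ebinom a b q p D"
  have "D n k - C n k = 0" for n k
    by (rule pascal_solution_zero[where w = "eW a b q p"])
      (use C D eW_nonzero[OF gen] in \<open>auto simp: is_ebinom_def algebra_simps\<close>)
  then show "D = C" by (auto simp: fun_eq_iff)
qed

end

theorem theorem8:
  fixes q p a b :: complex and n k :: int
  assumes "norm p < 1" and "q \<noteq> 0" and "generic_pt q p a b"
  shows "xy_coeff q p n k a b = ebinom a b q p n k
    \<and> (\<forall>i j. xy_pow1 q p n i j a b = (if 0 \<le> i \<and> i + j = n then ebinom a b q p n i else 0))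
    \<and> (\<forall>i j. xy_pow2 q p n i j a b = (if i \<le> n \<and> i + j = n then ebinom a b q p n i else 0))"
proof -
  have coeff: "ebinom a b q p = (\<lambda>n k. xy_coeff q p n k a b)"
    by (rule ebinom_eqI[OF assms(2,3) is_ebinom_xy_coeff[OF assms(2,3)]])
  have "xy_pow1 q p n i j a b = (if 0 \<le> i \<and> i + j = n then ebinom a b q p n i else 0)" for i j
    using supp_in_zero[OF supp_in_xy_pow1, of i j n] by (auto simp: coeff xy_coeff_def ray_x_def)
  moreover have "xy_pow2 q p n i j a b = (if i \<le> n \<and> i + j = n then ebinom a b q p n i else 0)" for i j
    using supp_in_zero[OF supp_in_xy_pow2, of i j n]
    by (auto simp: coeff xy_coeff_def ray_y_def xy_pow2_eq_xy_pow1)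
  ultimately show ?thesis by (simp add: coeff)
qed

end
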